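(* Let $0<a<4$ and let $p$ be an integer with $p\ge 2(12-a)/(4-a)$. Then the estimator $$\hat\theta_{a,p-2}(X)=\Bigl(1-\frac{p-2}{\|X\|^2+a}\Bigr)X$$ dominates the James--Stein estimator $\hat\theta_{\mathrm{JS}}(X)=(1-(p-2)/\|X\|^2)X$, i.e. $R(\theta,\hat\theta_{a,p-2})\le R(\theta,\hat\theta_{\mathrm{JS}})$ for all $\theta\in\mathbb{R}^p$. Moreover, with $\Phi(w)=w/\{a(p-2)\}$ one has, for $p\ge 7$, $$I\Bigl(\Phi,\tfrac{1}{p-2};p\Bigr)\ge\frac{p-6}{a(p-2)}.$$
   Context: $X\sim\mathcal{N}_p(\theta,I_p)$, risk $R(\theta,\hat\theta)=\mathrm{E}_\theta[\|\hat\theta(X)-\theta\|^2]$. For $\Phi$ positive non-decreasing, $C>0$ and $p\ge3$, $$I(\Phi,C;p)=\frac{\displaystyle\int_0^\infty \Phi(w)\,\frac{w^{p/2-1}e^{-w/2}}{w\{\int_0^w t^{-1}\Phi(t)\,\mathrm{d}t+C\}^2}\,\mathrm{d}w}{\displaystyle\int_0^\infty \frac{w^{p/2-1}e^{-w/2}}{w\{\int_0^w t^{-1}\Phi(t)\,\mathrm{d}t+C\}^2}\,\mathrm{d}w}.$$ *)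

theory Defs
  imports "HOL-Analysis.Analysis"
begin

definition gauss_density :: "real^'n \<Rightarrow> real^'n \<Rightarrow> real" where
  "gauss_density \<theta> x =
     (2 * pi) powr (- real CARD('n) / 2) * exp (- (norm (x - \<theta>))\<^sup>2 / 2)"

definition gauss_vec :: "real^'n \<Rightarrow> (real^'n) measure" where
  "gauss_vec \<theta> = density lborel (\<lambda>x. ennreal (gauss_density \<theta> x))"

text \<open>Quadratic risk R(theta, est) = E_theta ||est(X) - theta||^2 (as an extended
  nonnegative real, so that it is always defined).\<close>
definition risk :: "real^'n \<Rightarrow> (real^'n \<Rightarrow> real^'n) \<Rightarrow> ennreal" where
  "risk \<theta> est = (\<integral>\<^sup>+ x. ennreal ((norm (est x - \<theta>))\<^sup>2) \<partial>gauss_vec \<theta>)"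

definition JS_est :: "real^'n \<Rightarrow> real^'n" where
  "JS_est x = (1 - (real CARD('n) - 2) / (norm x)\<^sup>2) *\<^sub>R x"

definition shrink_est :: "real \<Rightarrow> real \<Rightarrow> real^'n \<Rightarrow> real^'n" where
  "shrink_est a c x = (1 - c / ((norm x)\<^sup>2 + a)) *\<^sub>R x"

definition I_weight :: "(real \<Rightarrow> real) \<Rightarrow> real \<Rightarrow> nat \<Rightarrow> real \<Rightarrow> real" where
  "I_weight \<Phi> C p w =
     w powr (real p / 2 - 1) * exp (- w / 2) /
     (w * ((LBINT t=0..w. \<Phi> t / t) + C)\<^sup>2)"

definition I_fun :: "(real \<Rightarrow> real) \<Rightarrow> real \<Rightarrow> nat \<Rightarrow> real" where
  "I_fun \<Phi> C p =
     (\<integral>w\<in>{0<..}. \<Phi> w * I_weight \<Phi> C p w \<partial>lborel) /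
     (\<integral>w\<in>{0<..}. I_weight \<Phi> C p w \<partial>lborel)"

end

theory Submission
  imports Defs "HOL-Probability.Distributions" "HOL-Real_Asymp.Real_Asymp"
begin

(* Write W = |x|^2, T = theta . x and c = p - 2. Pointwise, the James--Stein loss minus the loss
   of (1 - c/(W + a)) x splits into a Stein term Q(W) (W - T) - p Q(W) - 2 W Q'(W) for a rational
   profile Q, a term c a k(W) T with k >= 0, and a remainder c a (A W + B)/(W + a)^4 whose
   coefficients are nonnegative when p >= 2(12 - a)/(4 - a). Stein's identity, obtained by
   differentiating the scaling law of Lebesgue measure, makes the expectation of the first term
   vanish; the second has nonnegative expectation because the Gaussian centred at theta puts more
   mass on {T > 0} than on its mirror image.

   With Phi(w) = w/(a c) and C = 1/c, the inner integral plus C equals (w + a)/(a c), so I is the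
   ratio J1/(a c J0) of the moments of h(w) = w^(p/2 - 2) e^(-w/2)/(w + a)^2 over (0, oo).
   Integrating the derivative of w h(w) over (0, oo) gives
   (p/2 - 1) J0 - J1/2 - 2 int h(w) w/(w + a) dw = 0, and w/(w + a) < 1 yields J1 >= (p - 6) J0. *)

section \<open>Scaling and the radial Euler identity\<close>

lemma power2_norm_eq_sum_Basis: "(norm (x::'a::euclidean_space))\<^sup>2 = (\<Sum>b\<in>Basis. (x \<bullet> b)\<^sup>2)"
  unfolding power2_norm_eq_inner by (subst euclidean_inner) (simp add: power2_eq_square)

lemma integrable_gaussian_kernel:
  assumes "0 < \<sigma>"
  shows "integrable lborel (\<lambda>x::'a::euclidean_space. exp (- (norm x)\<^sup>2 / (2*\<sigma>\<^sup>2)))"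
proof -
  define K where "K = sqrt (2*pi*\<sigma>\<^sup>2) ^ DIM('a)"
  have K: "K > 0" using assms by (simp add: K_def)
  have factor: "exp (- (norm x)\<^sup>2 / (2*\<sigma>\<^sup>2)) = K * (\<Prod>b\<in>Basis. normal_density 0 \<sigma> (x \<bullet> b))"
    for x :: 'a
  proof -
    have "(\<Prod>b\<in>Basis. normal_density 0 \<sigma> (x \<bullet> b))
        = (\<Prod>b\<in>(Basis::'a set). 1 / sqrt (2*pi*\<sigma>\<^sup>2) * exp (- (x \<bullet> b)\<^sup>2 / (2*\<sigma>\<^sup>2)))"
      by (simp add: normal_density_def)
    also have "\<dots> = (1 / sqrt (2*pi*\<sigma>\<^sup>2)) ^ DIM('a) * exp (\<Sum>b\<in>Basis. - (x \<bullet> b)\<^sup>2 / (2*\<sigma>\<^sup>2))"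
      by (simp only: prod.distrib prod_constant exp_sum[OF finite_Basis])
    also have "(\<Sum>b\<in>(Basis::'a set). - (x \<bullet> b)\<^sup>2 / (2*\<sigma>\<^sup>2)) = - (norm x)\<^sup>2 / (2*\<sigma>\<^sup>2)"
      by (simp add: power2_norm_eq_sum_Basis sum_divide_distrib[symmetric] sum_negf)
    finally show ?thesis using K assms unfolding K_def by (simp add: field_simps power_divide)
  qed
  have "(\<integral>\<^sup>+x. ennreal (exp (- (norm x)\<^sup>2 / (2*\<sigma>\<^sup>2))) \<partial>(lborel::'a measure))
      = ennreal K * (\<integral>\<^sup>+x. (\<Prod>b\<in>Basis. ennreal (normal_density 0 \<sigma> (x \<bullet> b))) \<partial>(lborel::'a measure))"
  proof -
    have "ennreal (exp (- (norm x)\<^sup>2 / (2*\<sigma>\<^sup>2)))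
        = ennreal K * (\<Prod>b\<in>Basis. ennreal (normal_density 0 \<sigma> (x \<bullet> b)))" for x :: 'a
      unfolding factor using K by (simp add: ennreal_mult prod_nonneg prod_ennreal)
    then show ?thesis by (simp add: nn_integral_cmult)
  qed
  also have "\<dots> = ennreal K * (\<Prod>b\<in>(Basis::'a set). \<integral>\<^sup>+y. ennreal (normal_density 0 \<sigma> y) \<partial>lborel)"
    by (subst nn_integral_lborel_prod) auto
  also have "(\<integral>\<^sup>+y. ennreal (normal_density 0 \<sigma> y) \<partial>lborel) = 1"
    using assms by (subst nn_integral_eq_integral) auto
  finally show ?thesis
    by (intro integrableI_nonneg) (auto simp: top.not_eq_extremum[symmetric])
qed

lemma nn_integral_lborel_scaleR:
  fixes f :: "'a::euclidean_space \<Rightarrow> ennreal"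
  assumes [measurable]: "f \<in> borel_measurable borel" and "c \<noteq> 0"
  shows "(\<integral>\<^sup>+x. f x \<partial>lborel) = ennreal (\<bar>c\<bar>^DIM('a)) * (\<integral>\<^sup>+x. f (c *\<^sub>R x) \<partial>lborel)"
  by (subst lborel_affine[OF \<open>c \<noteq> 0\<close>, of 0])
     (simp add: nn_integral_density nn_integral_distr nn_integral_cmult)

lemma integrable_lborel_scaleR:
  fixes f :: "'a::euclidean_space \<Rightarrow> real"
  assumes f: "integrable lborel f" and c: "c \<noteq> 0"
  shows "integrable lborel (\<lambda>x. f (c *\<^sub>R x))"
proof -
  have [measurable]: "f \<in> borel_measurable borel" using f by auto
  have "ennreal (\<bar>c\<bar>^DIM('a)) * (\<integral>\<^sup>+x. ennreal (norm (f (c *\<^sub>R x))) \<partial>lborel) < \<infinity>"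
    using f nn_integral_lborel_scaleR[of "\<lambda>x. ennreal (norm (f x))" c] c
    by (simp add: integrable_iff_bounded)
  then show ?thesis
    using c by (auto simp: ennreal_mult_less_top integrable_iff_bounded)
qed

lemma integral_lborel_scaleR:
  fixes f :: "'a::euclidean_space \<Rightarrow> real"
  assumes f: "integrable lborel f" and c: "c \<noteq> 0"
  shows "integral\<^sup>L lborel f = \<bar>c\<bar>^DIM('a) * integral\<^sup>L lborel (\<lambda>x. f (c *\<^sub>R x))"
proof -
  have [measurable]: "f \<in> borel_measurable borel" using f by auto
  show ?thesis
    using c f integrable_lborel_scaleR[OF f c]
    by (subst lborel_affine[OF c, of 0]) (simp add: integral_density integral_distr)
qed

lemma DERIV_difference_quotient_LIMSEQ:
  assumes "(F has_real_derivative D) (at t)"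
  shows "(\<lambda>n. (F (t + inverse (real (Suc n))) - F t) / inverse (real (Suc n))) \<longlonglongrightarrow> D"
proof -
  have "((\<lambda>h. (F (t + h) - F t) / h) \<longlongrightarrow> D) (at 0)"
    using assms by (simp add: DERIV_def)
  then show ?thesis
    using LIMSEQ_inverse_real_of_nat unfolding tendsto_at_iff_sequentially by (auto simp: o_def)
qed

text \<open>Differentiate \<open>\<integral> f (t x) dx = t\<^sup>-\<^sup>d \<integral> f\<close> under the integral sign at \<open>t = 1\<close>,
  along the difference quotients \<open>t = 1 + 1/(n+1)\<close>, using the mean value theorem for the
  domination.\<close>
lemma integral_radial_derivative:
  fixes f :: "'a::euclidean_space \<Rightarrow> real" and g :: "real \<Rightarrow> 'a \<Rightarrow> real"
  assumes [measurable]: "f \<in> borel_measurable borel" "g 1 \<in> borel_measurable borel"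
    and f: "integrable lborel f" and B: "integrable lborel B"
    and g: "\<And>x t. 1 \<le> t \<Longrightarrow> t \<le> 2 \<Longrightarrow> ((\<lambda>s. f (s *\<^sub>R x)) has_real_derivative g t x) (at t)"
    and g_le: "\<And>x t. 1 \<le> t \<Longrightarrow> t \<le> 2 \<Longrightarrow> \<bar>g t x\<bar> \<le> B x"
  shows "integral\<^sup>L lborel (g 1) = - real DIM('a) * integral\<^sup>L lborel f"
proof -
  define h where "h n = inverse (real (Suc n))" for n
  define s where "s n = 1 + h n" for n
  have h: "0 < h n" "h n \<le> 1" for n by (auto simp: h_def field_simps)
  have s: "0 < s n" "1 < s n" "s n \<le> 2" for n using h[of n] by (auto simp: s_def)
  define D where "D n x = (f (s n *\<^sub>R x) - f x) / h n" for n x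
  have [measurable]: "D n \<in> borel_measurable borel" for n
    unfolding D_def[abs_def] by measurable
  have D_le: "\<bar>D n x\<bar> \<le> B x" for n x
  proof -
    obtain z where "1 < z" "z < s n" "f (s n *\<^sub>R x) - f (1 *\<^sub>R x) = (s n - 1) * g z x"
      using MVT2[of 1 "s n" "\<lambda>t. f (t *\<^sub>R x)" "\<lambda>t. g t x"] s[of n] g by force
    then show ?thesis using g_le[of z x] s[of n] h[of n] by (simp add: D_def s_def)
  qed
  have "(\<lambda>n. D n x) \<longlonglongrightarrow> g 1 x" for x
    using DERIV_difference_quotient_LIMSEQ[OF g[of 1 x]] by (simp add: D_def s_def h_def)
  then have lim_g: "(\<lambda>n. integral\<^sup>L lborel (D n)) \<longlonglongrightarrow> integral\<^sup>L lborel (g 1)"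
    by (intro integral_dominated_convergence[where w=B]) (use B D_le in auto)
  have int_D: "integral\<^sup>L lborel (D n) = ((inverse (s n ^ DIM('a)) - 1) / h n) * integral\<^sup>L lborel f" for n
  proof -
    have scaled: "integral\<^sup>L lborel (\<lambda>x. f (s n *\<^sub>R x)) = inverse (s n ^ DIM('a)) * integral\<^sup>L lborel f"
      using integral_lborel_scaleR[OF f, of "s n"] s[of n] by (simp add: field_simps)
    have "integral\<^sup>L lborel (D n) = (integral\<^sup>L lborel (\<lambda>x. f (s n *\<^sub>R x)) - integral\<^sup>L lborel f) / h n"
      unfolding D_def using integrable_lborel_scaleR[OF f, of "s n"] f s[of n] by simp
    then show ?thesis unfolding scaled by (simp add: field_simps)
  qed
  have "((\<lambda>t. inverse (t ^ DIM('a))) has_real_derivative - real DIM('a)) (at 1)"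
    by (auto intro!: derivative_eq_intros)
  from DERIV_difference_quotient_LIMSEQ[OF this]
  have "(\<lambda>n. (inverse (s n ^ DIM('a)) - 1) / h n) \<longlonglongrightarrow> - real DIM('a)"
    by (simp add: s_def h_def)
  then have "(\<lambda>n. integral\<^sup>L lborel (D n)) \<longlonglongrightarrow> - real DIM('a) * integral\<^sup>L lborel f"
    unfolding int_D by (intro tendsto_mult) auto
  then show ?thesis using LIMSEQ_unique[OF lim_g] by simp
qed

section \<open>The Gaussian density\<close>

definition gauss_const :: "nat \<Rightarrow> real" where
  "gauss_const d = (2*pi) powr (- real d / 2)"

lemma gauss_const_pos: "0 < gauss_const d"
  by (simp add: gauss_const_def)

lemma gauss_density_eq:
  "gauss_density \<theta> x = gauss_const CARD('n) * exp (- (norm (x - \<theta>))\<^sup>2 / 2)"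
  for \<theta> x :: "real^'n"
  by (simp add: gauss_density_def gauss_const_def)

lemma gauss_density_nonneg: "0 \<le> gauss_density \<theta> x"
  by (simp add: gauss_density_def)

lemma borel_measurable_gauss_density[measurable]: "gauss_density \<theta> \<in> borel_measurable borel"
  unfolding gauss_density_def[abs_def] by measurable

lemma norm_scaleR_diff_power2:
  "(norm (s *\<^sub>R x - \<theta>))\<^sup>2 = s\<^sup>2 * (norm x)\<^sup>2 - 2 * s * (\<theta> \<bullet> x) + (norm \<theta>)\<^sup>2"
  for x \<theta> :: "'a::real_inner"
  unfolding power2_norm_eq_inner
  by (simp add: inner_diff_left inner_diff_right inner_commute algebra_simps power2_eq_square)

lemma gauss_density_scaleR_le:
  fixes \<theta> x :: "real^'n"
  assumes "1 \<le> t"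
  shows "gauss_density \<theta> (t *\<^sub>R x)
           \<le> gauss_const CARD('n) * exp ((norm \<theta>)\<^sup>2/2) * exp (- (norm x)\<^sup>2/4)"
proof -
  have "norm (t *\<^sub>R x) \<le> norm \<theta> + norm (t *\<^sub>R x - \<theta>)" by (rule norm_triangle_sub)
  then have "(norm (t *\<^sub>R x))\<^sup>2 \<le> (norm \<theta> + norm (t *\<^sub>R x - \<theta>))\<^sup>2"
    by (intro power_mono) auto
  also have "\<dots> \<le> 2*(norm \<theta>)\<^sup>2 + 2*(norm (t *\<^sub>R x - \<theta>))\<^sup>2"
    by (smt (verit, best) power2_sum power2_diff zero_le_power2)
  moreover have "(norm x)\<^sup>2 \<le> (norm (t *\<^sub>R x))\<^sup>2"
    using assms by (simp add: power_mult_distrib one_le_power mult_le_cancel_right1)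
  ultimately have "- (norm (t *\<^sub>R x - \<theta>))\<^sup>2/2 \<le> (norm \<theta>)\<^sup>2/2 + - (norm x)\<^sup>2/4"
    by linarith
  then show ?thesis
    unfolding gauss_density_eq using gauss_const_pos by (simp add: mult.assoc flip: exp_add)
qed

lemma gauss_density_ge_on_unit_ball:
  fixes \<theta> x :: "real^'n"
  assumes "norm x \<le> 1"
  shows "gauss_const CARD('n) * exp (- (1 + norm \<theta>)\<^sup>2/2) \<le> gauss_density \<theta> x"
proof -
  have "norm (x - \<theta>) \<le> 1 + norm \<theta>" using assms norm_triangle_ineq4[of x \<theta>] by linarith
  then have "(norm (x - \<theta>))\<^sup>2 \<le> (1 + norm \<theta>)\<^sup>2" by (intro power_mono) auto
  then show ?thesis unfolding gauss_density_eq using gauss_const_pos by simp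
qed

lemma integrable_exp_minus_norm_sq_div_4: "integrable lborel (\<lambda>x::'a::euclidean_space. exp (- (norm x)\<^sup>2/4))"
  using integrable_gaussian_kernel[of "sqrt 2", where 'a='a] by simp

lemma integrable_gauss_density: "integrable lborel (gauss_density (\<theta>::real^'n))"
proof (rule Bochner_Integration.integrable_bound)
  show "integrable lborel
          (\<lambda>x::real^'n. gauss_const CARD('n) * exp ((norm \<theta>)\<^sup>2/2) * exp (- (norm x)\<^sup>2/4))"
    using integrable_exp_minus_norm_sq_div_4 by auto
  show "AE x in lborel. norm (gauss_density \<theta> x)
          \<le> norm (gauss_const CARD('n) * exp ((norm \<theta>)\<^sup>2/2) * exp (- (norm x)\<^sup>2/4))"
    using gauss_density_scaleR_le[of 1 \<theta>] gauss_density_nonneg[of \<theta>]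
    by (intro AE_I2) (simp add: order_trans[OF _ abs_ge_self])
qed measurable

text \<open>Integrability of \<open>1/\<parallel>x\<parallel>\<^sup>2\<close> against one Gaussian density passes to the centred kernel:
  near the origin the density is bounded below, away from it \<open>1/\<parallel>x\<parallel>\<^sup>2 \<le> 1\<close>.\<close>
lemma integrable_gaussian_kernel_div_norm_sq:
  fixes \<theta> :: "real^'n"
  assumes "integrable lborel (\<lambda>x. gauss_density \<theta> x / (norm x)\<^sup>2)"
  shows "integrable lborel (\<lambda>x::real^'n. exp (- (norm x)\<^sup>2/4) / (norm x)\<^sup>2)"
proof (rule Bochner_Integration.integrable_bound)
  define \<kappa> where "\<kappa> = gauss_const CARD('n) * exp (- (1 + norm \<theta>)\<^sup>2/2)"
  have \<kappa>: "0 < \<kappa>" unfolding \<kappa>_def using gauss_const_pos by simp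
  show "integrable lborel
          (\<lambda>x. (1/\<kappa>) * (gauss_density \<theta> x / (norm x)\<^sup>2) + exp (- (norm x)\<^sup>2/4))"
    by (intro Bochner_Integration.integrable_add Bochner_Integration.integrable_mult_right
        assms integrable_exp_minus_norm_sq_div_4)
  have bound_nonneg: "0 \<le> (1/\<kappa>) * (gauss_density \<theta> x / (norm x)\<^sup>2)" for x
    using \<kappa> gauss_density_nonneg[of \<theta> x] by simp
  have "exp (- (norm x)\<^sup>2/4) / (norm x)\<^sup>2
          \<le> (1/\<kappa>) * (gauss_density \<theta> x / (norm x)\<^sup>2) + exp (- (norm x)\<^sup>2/4)" for x :: "real^'n"
  proof (cases "norm x \<le> 1")
    case True
    have "exp (- (norm x)\<^sup>2/4) * \<kappa> \<le> \<kappa>" using \<kappa> by (simp add: mult_left_le_one_le)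
    also have "\<kappa> \<le> gauss_density \<theta> x"
      using gauss_density_ge_on_unit_ball[OF True, of \<theta>] unfolding \<kappa>_def .
    finally have "exp (- (norm x)\<^sup>2/4) \<le> gauss_density \<theta> x / \<kappa>"
      using \<kappa> by (simp add: le_divide_eq)
    then have "exp (- (norm x)\<^sup>2/4) / (norm x)\<^sup>2 \<le> (gauss_density \<theta> x / \<kappa>) / (norm x)\<^sup>2"
      by (rule divide_right_mono) simp
    then have "exp (- (norm x)\<^sup>2/4) / (norm x)\<^sup>2 \<le> (1/\<kappa>) * (gauss_density \<theta> x / (norm x)\<^sup>2)"
      by simp
    moreover have "0 \<le> exp (- (norm x)\<^sup>2/4)" by simp
    ultimately show ?thesis by linarith
  next
    case False
    then have "exp (- (norm x)\<^sup>2/4) / (norm x)\<^sup>2 \<le> exp (- (norm x)\<^sup>2/4)"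
      by (simp add: divide_le_eq mult_le_cancel_left1 one_le_power)
    then show ?thesis using bound_nonneg[of x] by linarith
  qed
  then show "AE x in lborel. norm (exp (- (norm x)\<^sup>2/4) / (norm x)\<^sup>2)
      \<le> norm ((1/\<kappa>) * (gauss_density \<theta> x / (norm x)\<^sup>2) + exp (- (norm x)\<^sup>2/4))"
    using bound_nonneg by (intro AE_I2) (simp add: abs_of_nonneg)
qed measurable

lemma inner_mult_gauss_density_reflect_nonneg:
  fixes \<theta> x :: "real^'n"
  shows "0 \<le> (\<theta> \<bullet> x) * (gauss_density \<theta> x - gauss_density \<theta> (-x))"
proof -
  have "(norm (x - \<theta>))\<^sup>2 = (norm x)\<^sup>2 - 2*(\<theta> \<bullet> x) + (norm \<theta>)\<^sup>2"
       "(norm (-x - \<theta>))\<^sup>2 = (norm x)\<^sup>2 + 2*(\<theta> \<bullet> x) + (norm \<theta>)\<^sup>2"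
    using norm_scaleR_diff_power2[of 1 x \<theta>] norm_scaleR_diff_power2[of "-1" x \<theta>] by simp_all
  then have "0 \<le> \<theta> \<bullet> x \<longleftrightarrow> gauss_density \<theta> (-x) \<le> gauss_density \<theta> x"
    unfolding gauss_density_eq using gauss_const_pos by (simp add: mult_le_cancel_left_pos)
  then show ?thesis by (cases "0 \<le> \<theta> \<bullet> x") (auto simp: mult_nonpos_nonpos)
qed

lemma integral_radial_inner_gauss_nonneg:
  fixes \<theta> :: "real^'n" and k :: "real \<Rightarrow> real"
  assumes k: "\<And>w. 0 \<le> w \<Longrightarrow> 0 \<le> k w"
    and int: "integrable lborel (\<lambda>x. k ((norm x)\<^sup>2) * (\<theta> \<bullet> x) * gauss_density \<theta> x)"
  shows "0 \<le> (\<integral>x. k ((norm x)\<^sup>2) * (\<theta> \<bullet> x) * gauss_density \<theta> x \<partial>lborel)"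
proof -
  define h where "h x = k ((norm x)\<^sup>2) * (\<theta> \<bullet> x) * gauss_density \<theta> x" for x :: "real^'n"
  have h: "integrable lborel h" using int unfolding h_def .
  have h_reflect: "integrable lborel (\<lambda>x. h (-x))" "integral\<^sup>L lborel h = integral\<^sup>L lborel (\<lambda>x. h (-x))"
    using integral_lborel_scaleR[OF h, of "-1"] integrable_lborel_scaleR[OF h, of "-1"] by simp_all
  have "2 * integral\<^sup>L lborel h = integral\<^sup>L lborel (\<lambda>x. h x + h (-x))"
    using h h_reflect by simp
  also have "\<dots> = (\<integral>x. k ((norm x)\<^sup>2) * ((\<theta> \<bullet> x) * (gauss_density \<theta> x - gauss_density \<theta> (-x))) \<partial>lborel)"
    unfolding h_def by (simp add: algebra_simps)
  also have "\<dots> \<ge> 0"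
    by (intro integral_nonneg_AE AE_I2 mult_nonneg_nonneg k inner_mult_gauss_density_reflect_nonneg
        zero_le_power2)
  finally show ?thesis unfolding h_def by simp
qed

section \<open>Stein's identity for radial functions\<close>

lemma inverse_le_one_plus_inverse_power2: "0 < (y::real) \<Longrightarrow> 1/y \<le> 1 + 1/y\<^sup>2"
proof (cases "y \<le> 1")
  case True
  assume "0 < y"
  then have "y\<^sup>2 \<le> y" using True by (simp add: power2_eq_square mult_left_le_one_le)
  then have "1/y \<le> 1/y\<^sup>2" using \<open>0 < y\<close> by (intro divide_left_mono) auto
  then show ?thesis by simp
next
  case False
  then have "1/y \<le> 1" by simp
  moreover have "0 \<le> 1/y\<^sup>2" by simp
  ultimately show ?thesis by linarith
qed

lemma radial_derivative_coeff_bound: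
  fixes t r W T M q q' \<tau> :: real
  assumes t: "1 \<le> t" and r: "0 < r" and W: "W = r\<^sup>2" and T: "\<bar>T\<bar> \<le> \<tau> * r" and \<tau>: "0 \<le> \<tau>"
    and q': "(t\<^sup>2*W) * \<bar>q'\<bar> \<le> M/(t\<^sup>2*W)" and q: "\<bar>q\<bar> \<le> M/(t\<^sup>2*W)" and M: "0 \<le> M"
  shows "\<bar>2*t*W*q' - q*(t*W - T)\<bar> \<le> M * ((2 + \<tau>)/W + 1 + \<tau>)"
proof -
  have W0: "0 < W" using W r by simp
  have tW: "0 < t\<^sup>2*W" using W0 t by simp
  have "\<bar>q'\<bar> * (t\<^sup>2*W)\<^sup>2 \<le> M"
    using q' tW by (simp add: le_divide_eq power2_eq_square algebra_simps)
  then have "\<bar>q'\<bar> \<le> M/(t\<^sup>2*W)\<^sup>2"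
    using tW by (subst pos_le_divide_eq) auto
  then have "(2*t*W)*\<bar>q'\<bar> \<le> 2*t*W*(M/(t\<^sup>2*W)\<^sup>2)"
    using t W0 by (intro mult_left_mono) auto
  then have "\<bar>2*t*W*q'\<bar> \<le> 2*t*W*(M/(t\<^sup>2*W)\<^sup>2)"
    using t W0 by (simp add: abs_mult)
  also have "\<dots> = 2*M/(t^3*W)" using t W0 by (simp add: field_simps power2_eq_square power3_eq_cube)
  also have "\<dots> \<le> 2*M/W"
    using M W0 t by (intro divide_left_mono) (auto simp: one_le_power)
  finally have A: "\<bar>2*t*W*q'\<bar> \<le> 2*M/W" .
  have "\<bar>q * (t*W)\<bar> \<le> M/(t\<^sup>2*W) * (t*W)"
    using mult_right_mono[OF q, of "t*W"] t W0 by (simp add: abs_mult)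
  also have "\<dots> = M / t" using t W0 by (simp add: field_simps power2_eq_square)
  also have "\<dots> \<le> M" using t M by (simp add: divide_le_eq mult_le_cancel_left1)
  finally have B: "\<bar>q * (t*W)\<bar> \<le> M" .
  have "\<bar>q * T\<bar> \<le> M/(t\<^sup>2*W) * (\<tau> * r)"
    using mult_mono[OF q T] M tW by (simp add: abs_mult)
  also have "\<dots> \<le> M/W * (\<tau> * r)"
    using t W0 M \<tau> r by (intro mult_right_mono divide_left_mono) (auto simp: one_le_power)
  also have "\<dots> = M * \<tau> * (1/r)" using W r by (simp add: field_simps power2_eq_square)
  also have "\<dots> \<le> M * \<tau> * (1 + 1/W)"
    unfolding W using M \<tau> by (intro mult_left_mono inverse_le_one_plus_inverse_power2 r) simp_all
  finally have C: "\<bar>q * T\<bar> \<le> M * \<tau> * (1 + 1/W)" .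
  have "\<bar>2*t*W*q' - q*(t*W - T)\<bar> \<le> \<bar>2*t*W*q'\<bar> + \<bar>q * (t*W)\<bar> + \<bar>q * T\<bar>"
    by (simp add: right_diff_distrib)
  also have "\<dots> \<le> 2*M/W + M + M * \<tau> * (1 + 1/W)" using A B C by linarith
  also have "\<dots> = M * ((2 + \<tau>)/W + 1 + \<tau>)" using W0 by (simp add: field_simps)
  finally show ?thesis .
qed

lemma has_real_derivative_radial_gauss:
  fixes \<theta> x :: "real^'n"
  assumes "(Q has_real_derivative Q' (t\<^sup>2 * (norm x)\<^sup>2)) (at (t\<^sup>2 * (norm x)\<^sup>2))"
  shows "((\<lambda>s. Q ((norm (s *\<^sub>R x))\<^sup>2) * gauss_density \<theta> (s *\<^sub>R x)) has_real_derivative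
           (2*t*(norm x)\<^sup>2 * Q' (t\<^sup>2*(norm x)\<^sup>2) - Q (t\<^sup>2*(norm x)\<^sup>2) * (t*(norm x)\<^sup>2 - \<theta>\<bullet>x))
             * gauss_density \<theta> (t *\<^sub>R x)) (at t)"
proof -
  define W where "W = (norm x)\<^sup>2"
  define T where "T = \<theta> \<bullet> x"
  define K where "K = gauss_const CARD('n)"
  define N where "N = (norm \<theta>)\<^sup>2"
  have gauss_scaled: "gauss_density \<theta> (s *\<^sub>R x) = K * exp (- (s\<^sup>2 * W - 2 * s * T + N)/2)" for s
    by (simp add: gauss_density_eq K_def N_def W_def T_def norm_scaleR_diff_power2)
  have "((\<lambda>s. Q (s\<^sup>2 * W)) has_real_derivative Q' (t\<^sup>2 * W) * (2*t*W)) (at t)"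
    using assms unfolding W_def by (auto intro!: DERIV_chain2[of Q] derivative_eq_intros)
  moreover have "((\<lambda>s. K * exp (- (s\<^sup>2 * W - 2 * s * T + N)/2)) has_real_derivative
                   K * (exp (- (t\<^sup>2 * W - 2 * t * T + N)/2) * (- (2*t*W - 2*T)/2))) (at t)"
    by (auto intro!: derivative_eq_intros)
  ultimately have D: "((\<lambda>s. Q (s\<^sup>2 * W) * (K * exp (- (s\<^sup>2 * W - 2 * s * T + N)/2))) has_real_derivative
      Q' (t\<^sup>2 * W) * (2*t*W) * (K * exp (- (t\<^sup>2 * W - 2 * t * T + N)/2))
      + K * (exp (- (t\<^sup>2 * W - 2 * t * T + N)/2) * (- (2*t*W - 2*T)/2)) * Q (t\<^sup>2 * W)) (at t)"
    by (rule DERIV_mult)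
  have F: "(\<lambda>s. Q ((norm (s *\<^sub>R x))\<^sup>2) * gauss_density \<theta> (s *\<^sub>R x))
      = (\<lambda>s. Q (s\<^sup>2 * W) * (K * exp (- (s\<^sup>2 * W - 2 * s * T + N)/2)))"
    unfolding gauss_scaled by (simp add: W_def power_mult_distrib)
  have V: "(2*t*W * Q' (t\<^sup>2*W) - Q (t\<^sup>2*W) * (t*W - T)) * gauss_density \<theta> (t *\<^sub>R x)
      = Q' (t\<^sup>2 * W) * (2*t*W) * (K * exp (- (t\<^sup>2 * W - 2 * t * T + N)/2))
        + K * (exp (- (t\<^sup>2 * W - 2 * t * T + N)/2) * (- (2*t*W - 2*T)/2)) * Q (t\<^sup>2 * W)"
    unfolding gauss_scaled by (simp add: field_simps)
  show ?thesis unfolding W_def[symmetric] T_def[symmetric] F V by (rule D)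
qed

lemma integrable_radial_gauss:
  fixes \<theta> :: "real^'n" and Q :: "real \<Rightarrow> real"
  assumes [measurable]: "Q \<in> borel_measurable borel"
    and Q_le: "\<And>w. 0 < w \<Longrightarrow> \<bar>Q w\<bar> \<le> M / w"
    and int_inverse: "integrable lborel (\<lambda>x. gauss_density \<theta> x / (norm x)\<^sup>2)"
  shows "integrable lborel (\<lambda>x. Q ((norm x)\<^sup>2) * gauss_density \<theta> x)"
proof (rule Bochner_Integration.integrable_bound)
  show "integrable lborel (\<lambda>x. M * (gauss_density \<theta> x / (norm x)\<^sup>2))"
    using int_inverse by (rule Bochner_Integration.integrable_mult_right)
  show "AE x in lborel. norm (Q ((norm x)\<^sup>2) * gauss_density \<theta> x)
      \<le> norm (M * (gauss_density \<theta> x / (norm x)\<^sup>2))"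
    using AE_lborel_singleton[of 0]
  proof eventually_elim
    case (elim x)
    have M: "0 \<le> M" using Q_le[of 1] by simp
    have "\<bar>Q ((norm x)\<^sup>2)\<bar> * gauss_density \<theta> x \<le> (M / (norm x)\<^sup>2) * gauss_density \<theta> x"
      using elim by (intro mult_right_mono Q_le gauss_density_nonneg) auto
    then show ?case using M gauss_density_nonneg[of \<theta> x] by (simp add: abs_mult)
  qed
qed measurable

lemma abs_radial_gauss_derivative_le:
  fixes \<theta> x :: "real^'n" and Q Q' :: "real \<Rightarrow> real"
  assumes t: "1 \<le> t"
    and Q_le: "\<And>w. 0 < w \<Longrightarrow> \<bar>Q w\<bar> \<le> M / w"
    and Q'_le: "\<And>w. 0 < w \<Longrightarrow> w * \<bar>Q' w\<bar> \<le> M / w"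
  defines "C \<equiv> M * gauss_const CARD('n) * exp ((norm \<theta>)\<^sup>2/2)"
  shows "\<bar>(2*t*(norm x)\<^sup>2 * Q' (t\<^sup>2*(norm x)\<^sup>2) - Q (t\<^sup>2*(norm x)\<^sup>2) * (t*(norm x)\<^sup>2 - \<theta>\<bullet>x))
            * gauss_density \<theta> (t *\<^sub>R x)\<bar>
         \<le> C * ((2 + norm \<theta>) * (exp (- (norm x)\<^sup>2/4) / (norm x)\<^sup>2) + (1 + norm \<theta>) * exp (- (norm x)\<^sup>2/4))"
proof (cases "x = 0")
  case True
  have "0 \<le> M" using Q_le[of 1] by simp
  then have "0 \<le> C" unfolding C_def using gauss_const_pos[of "CARD('n)"] by simp
  then show ?thesis using True by simp
next
  case False
  define W where "W = (norm x)\<^sup>2"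
  have M: "0 \<le> M" using Q_le[of 1] by simp
  have W: "0 < W" "0 < t\<^sup>2 * W" using False t by (simp_all add: W_def)
  have "\<bar>2*t*W*Q' (t\<^sup>2*W) - Q (t\<^sup>2*W) * (t*W - \<theta> \<bullet> x)\<bar> \<le> M * ((2 + norm \<theta>)/W + 1 + norm \<theta>)"
    using t False W_def Cauchy_Schwarz_ineq2[of \<theta> x] Q'_le[OF W(2)] Q_le[OF W(2)] M
    by (intro radial_derivative_coeff_bound) simp_all
  moreover have "gauss_density \<theta> (t *\<^sub>R x) \<le> gauss_const CARD('n) * exp ((norm \<theta>)\<^sup>2/2) * exp (- W/4)"
    using gauss_density_scaleR_le[OF t, of \<theta> x] unfolding W_def by simp
  ultimately have "\<bar>(2*t*W*Q' (t\<^sup>2*W) - Q (t\<^sup>2*W) * (t*W - \<theta> \<bullet> x)) * gauss_density \<theta> (t *\<^sub>R x)\<bar>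
      \<le> M * ((2 + norm \<theta>)/W + 1 + norm \<theta>) * (gauss_const CARD('n) * exp ((norm \<theta>)\<^sup>2/2) * exp (- W/4))"
    unfolding abs_mult using M W gauss_density_nonneg[of \<theta>] by (intro mult_mono) auto
  also have "\<dots> = C * ((2 + norm \<theta>) * (exp (- W/4) / W) + (1 + norm \<theta>) * exp (- W/4))"
    unfolding C_def by (simp add: algebra_simps add_divide_distrib)
  finally show ?thesis unfolding W_def .
qed

definition stein_term :: "(real \<Rightarrow> real) \<Rightarrow> (real \<Rightarrow> real) \<Rightarrow> real^'n \<Rightarrow> real^'n \<Rightarrow> real" where
  "stein_term Q Q' \<theta> x = Q ((norm x)\<^sup>2) * ((norm x)\<^sup>2 - \<theta> \<bullet> x) - real CARD('n) * Q ((norm x)\<^sup>2)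
                         - 2 * (norm x)\<^sup>2 * Q' ((norm x)\<^sup>2)"

text \<open>Stein's identity \<open>E[(\<parallel>X\<parallel>\<^sup>2 - \<theta> \<bullet> X) Q(\<parallel>X\<parallel>\<^sup>2)] = E[p Q(\<parallel>X\<parallel>\<^sup>2) + 2 \<parallel>X\<parallel>\<^sup>2 Q'(\<parallel>X\<parallel>\<^sup>2)]\<close>
  is the radial Euler identity for \<open>f x = Q(\<parallel>x\<parallel>\<^sup>2) \<phi>\<^sub>\<theta>(x)\<close>. The growth conditions on \<open>Q\<close>
  dominate \<open>f\<close> and its radial derivatives by multiples of \<open>\<phi>\<^sub>\<theta>/\<parallel>x\<parallel>\<^sup>2\<close> and of a centred
  Gaussian kernel, whence the integrability hypothesis.\<close>
lemma stein_identity_radial: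
  fixes \<theta> :: "real^'n" and Q Q' :: "real \<Rightarrow> real"
  assumes [measurable]: "Q \<in> borel_measurable borel" "Q' \<in> borel_measurable borel"
    and Q': "\<And>w. 0 < w \<Longrightarrow> (Q has_real_derivative Q' w) (at w)"
    and Q_le: "\<And>w. 0 < w \<Longrightarrow> \<bar>Q w\<bar> \<le> M / w"
    and Q'_le: "\<And>w. 0 < w \<Longrightarrow> w * \<bar>Q' w\<bar> \<le> M / w"
    and int_inverse: "integrable lborel (\<lambda>x. gauss_density \<theta> x / (norm x)\<^sup>2)"
  shows "integrable lborel (\<lambda>x. stein_term Q Q' \<theta> x * gauss_density \<theta> x)"
    and "(\<integral>x. stein_term Q Q' \<theta> x * gauss_density \<theta> x \<partial>lborel) = 0"
proof -
  define C where "C = M * gauss_const CARD('n) * exp ((norm \<theta>)\<^sup>2/2)"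
  define f where "f x = Q ((norm x)\<^sup>2) * gauss_density \<theta> x" for x :: "real^'n"
  define g where "g t x = (2*t*(norm x)\<^sup>2 * Q' (t\<^sup>2*(norm x)\<^sup>2)
      - Q (t\<^sup>2*(norm x)\<^sup>2) * (t*(norm x)\<^sup>2 - \<theta>\<bullet>x)) * gauss_density \<theta> (t *\<^sub>R x)" for t and x :: "real^'n"
  define B where "B x = C * ((2 + norm \<theta>) * (exp (- (norm x)\<^sup>2/4) / (norm x)\<^sup>2)
      + (1 + norm \<theta>) * exp (- (norm x)\<^sup>2/4))" for x :: "real^'n"
  have [measurable]: "f \<in> borel_measurable borel" "g 1 \<in> borel_measurable borel"
    unfolding f_def[abs_def] g_def[abs_def] by measurable
  have int_f: "integrable lborel f"
    unfolding f_def[abs_def] using Q_le int_inverse by (intro integrable_radial_gauss) auto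
  have int_B: "integrable lborel B"
    unfolding B_def[abs_def]
    by (intro Bochner_Integration.integrable_add Bochner_Integration.integrable_mult_right
          integrable_gaussian_kernel_div_norm_sq[OF int_inverse] integrable_exp_minus_norm_sq_div_4)
  have g: "((\<lambda>s. f (s *\<^sub>R x)) has_real_derivative g t x) (at t)" if "1 \<le> t" for x t
  proof (cases "x = 0")
    case True
    then show ?thesis by (simp add: g_def f_def)
  next
    case False
    then show ?thesis
      unfolding f_def g_def using that by (intro has_real_derivative_radial_gauss Q') simp
  qed
  have g_le: "\<bar>g t x\<bar> \<le> B x" if "1 \<le> t" for x t
    unfolding g_def B_def C_def using that Q_le Q'_le by (rule abs_radial_gauss_derivative_le)
  have int_g1: "integrable lborel (g 1)"
    using g_le[of 1]
    by (intro Bochner_Integration.integrable_bound[OF int_B]) (auto intro!: AE_I2 order_trans[OF _ abs_ge_self])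
  have euler: "integral\<^sup>L lborel (g 1) = - real DIM(real^'n) * integral\<^sup>L lborel f"
    using g g_le by (intro integral_radial_derivative[OF _ _ int_f int_B]) auto
  have S_eq: "(\<lambda>x. stein_term Q Q' \<theta> x * gauss_density \<theta> x) = (\<lambda>x. - (g 1 x + real CARD('n) * f x))"
    by (rule ext) (simp add: stein_term_def g_def f_def algebra_simps)
  show "integrable lborel (\<lambda>x. stein_term Q Q' \<theta> x * gauss_density \<theta> x)"
    unfolding S_eq using int_g1 int_f by auto
  show "(\<integral>x. stein_term Q Q' \<theta> x * gauss_density \<theta> x \<partial>lborel) = 0"
    unfolding S_eq using int_g1 int_f euler by simp
qed

section \<open>A rational profile\<close>

definition rat_profile :: "real \<Rightarrow> real \<Rightarrow> real \<Rightarrow> real \<Rightarrow> real \<Rightarrow> real \<Rightarrow> real" where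
  "rat_profile \<alpha> \<beta> \<gamma> \<delta> a w = \<alpha>/w + \<beta>/(w+a) + \<gamma>/(w+a)^2 + \<delta>/(w+a)^3"

definition rat_profile_deriv :: "real \<Rightarrow> real \<Rightarrow> real \<Rightarrow> real \<Rightarrow> real \<Rightarrow> real \<Rightarrow> real" where
  "rat_profile_deriv \<alpha> \<beta> \<gamma> \<delta> a w = - (\<alpha>/w^2 + \<beta>/(w+a)^2 + 2*\<gamma>/(w+a)^3 + 3*\<delta>/(w+a)^4)"

lemma borel_measurable_rat_profile[measurable]:
  "rat_profile \<alpha> \<beta> \<gamma> \<delta> a \<in> borel_measurable borel"
  "rat_profile_deriv \<alpha> \<beta> \<gamma> \<delta> a \<in> borel_measurable borel"
  unfolding rat_profile_def[abs_def] rat_profile_deriv_def[abs_def] by measurable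

lemma has_real_derivative_rat_profile:
  assumes "0 < w" "0 < a"
  shows "(rat_profile \<alpha> \<beta> \<gamma> \<delta> a has_real_derivative rat_profile_deriv \<alpha> \<beta> \<gamma> \<delta> a w) (at w)"
proof -
  have "w \<noteq> 0" "w + a \<noteq> 0" using assms by auto
  then have "((\<lambda>w. \<alpha>/w) has_real_derivative - (\<alpha>/w^2)) (at w)"
    and "((\<lambda>w. \<beta>/(w+a)) has_real_derivative - (\<beta>/(w+a)^2)) (at w)"
    and "((\<lambda>w. \<gamma>/(w+a)^2) has_real_derivative - (2*\<gamma>/(w+a)^3)) (at w)"
    and "((\<lambda>w. \<delta>/(w+a)^3) has_real_derivative - (3*\<delta>/(w+a)^4)) (at w)"
    by (auto intro!: derivative_eq_intros simp: divide_simps eval_nat_numeral)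
  then have "((\<lambda>w. \<alpha>/w + \<beta>/(w+a) + \<gamma>/(w+a)^2 + \<delta>/(w+a)^3) has_real_derivative
      - (\<alpha>/w^2) + - (\<beta>/(w+a)^2) + - (2*\<gamma>/(w+a)^3) + - (3*\<delta>/(w+a)^4)) (at w)"
    by (intro DERIV_add)
  then show ?thesis
    unfolding rat_profile_def[abs_def] rat_profile_deriv_def by (simp add: algebra_simps)
qed

lemma power_Suc_add_ge: "0 \<le> (w::real) \<Longrightarrow> 0 \<le> (a::real) \<Longrightarrow> a^m * w \<le> (w + a) ^ Suc m"
proof -
  assume "0 \<le> w" "0 \<le> a"
  then have "a^m * w \<le> (w + a)^m * (w + a)"
    by (intro mult_mono power_mono) auto
  then show ?thesis by (simp add: mult.commute)
qed

lemma abs_div_power_add_le: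
  fixes w a \<gamma> :: real
  assumes "0 < w" "0 < a"
  shows "\<bar>\<gamma> / (w+a) ^ Suc m\<bar> \<le> \<bar>\<gamma>\<bar> / a^m / w"
    and "w * \<bar>\<gamma> / (w+a) ^ Suc (Suc m)\<bar> \<le> \<bar>\<gamma>\<bar> / a^m / w"
proof -
  have wa: "0 < w + a" using assms by simp
  have ge: "a^m * w \<le> (w + a) ^ Suc m" using assms by (intro power_Suc_add_ge) auto
  then show "\<bar>\<gamma> / (w+a) ^ Suc m\<bar> \<le> \<bar>\<gamma>\<bar> / a^m / w"
    using assms wa by (simp add: abs_divide divide_divide_eq_left frac_le)
  have "w * (a^m * w) \<le> (w + a) * (w + a) ^ Suc m"
    using ge assms by (intro mult_mono) auto
  then have "w / (w + a) ^ Suc (Suc m) \<le> 1 / (a^m * w)"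
    using assms wa by (simp add: divide_simps mult.commute)
  then have "\<bar>\<gamma>\<bar> * (w / (w + a) ^ Suc (Suc m)) \<le> \<bar>\<gamma>\<bar> * (1 / (a^m * w))"
    by (rule mult_left_mono) simp
  then show "w * \<bar>\<gamma> / (w+a) ^ Suc (Suc m)\<bar> \<le> \<bar>\<gamma>\<bar> / a^m / w"
    using wa by (simp add: abs_divide mult.commute)
qed

lemma abs_add4_le: "\<bar>(a::real) + b + c + d\<bar> \<le> \<bar>a\<bar> + \<bar>b\<bar> + \<bar>c\<bar> + \<bar>d\<bar>"
  by arith

lemma abs_rat_profile_le:
  assumes "0 < w" "0 < a"
  shows "\<bar>rat_profile \<alpha> \<beta> \<gamma> \<delta> a w\<bar> \<le> (\<bar>\<alpha>\<bar> + \<bar>\<beta>\<bar> + 2*\<bar>\<gamma>\<bar>/a + 3*\<bar>\<delta>\<bar>/a^2) / w"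
proof -
  have "\<bar>\<beta> / (w+a)\<bar> \<le> \<bar>\<beta>\<bar> / w" "\<bar>\<gamma> / (w+a)^2\<bar> \<le> \<bar>\<gamma>\<bar> / a / w"
       "\<bar>\<delta> / (w+a)^3\<bar> \<le> \<bar>\<delta>\<bar> / a^2 / w"
    using abs_div_power_add_le(1)[OF assms, of \<beta> 0] abs_div_power_add_le(1)[OF assms, of \<gamma> 1]
      abs_div_power_add_le(1)[OF assms, of \<delta> 2]
    by (simp_all add: numeral_eq_Suc)
  moreover have "\<bar>\<gamma>\<bar> / a / w \<le> 2*\<bar>\<gamma>\<bar> / a / w" "\<bar>\<delta>\<bar> / a^2 / w \<le> 3*\<bar>\<delta>\<bar> / a^2 / w"
    using assms by (simp_all add: divide_right_mono)
  ultimately have terms: "\<bar>\<beta> / (w+a)\<bar> \<le> \<bar>\<beta>\<bar> / w" "\<bar>\<gamma> / (w+a)^2\<bar> \<le> 2*\<bar>\<gamma>\<bar> / a / w"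
       "\<bar>\<delta> / (w+a)^3\<bar> \<le> 3*\<bar>\<delta>\<bar> / a^2 / w"
    by linarith+
  have "\<bar>rat_profile \<alpha> \<beta> \<gamma> \<delta> a w\<bar> \<le> \<bar>\<alpha> / w\<bar> + \<bar>\<beta> / (w+a)\<bar> + \<bar>\<gamma> / (w+a)^2\<bar> + \<bar>\<delta> / (w+a)^3\<bar>"
    unfolding rat_profile_def by (rule abs_add4_le)
  also have "\<dots> \<le> \<bar>\<alpha>\<bar> / w + \<bar>\<beta>\<bar> / w + 2*\<bar>\<gamma>\<bar> / a / w + 3*\<bar>\<delta>\<bar> / a^2 / w"
    using terms assms by (simp add: abs_divide)
  finally show ?thesis by (simp add: add_divide_distrib)
qed

lemma abs_rat_profile_deriv_le:
  assumes "0 < w" "0 < a"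
  shows "w * \<bar>rat_profile_deriv \<alpha> \<beta> \<gamma> \<delta> a w\<bar> \<le> (\<bar>\<alpha>\<bar> + \<bar>\<beta>\<bar> + 2*\<bar>\<gamma>\<bar>/a + 3*\<bar>\<delta>\<bar>/a^2) / w"
proof -
  have terms: "w * \<bar>\<beta> / (w+a)^2\<bar> \<le> \<bar>\<beta>\<bar> / w" "w * \<bar>2*\<gamma> / (w+a)^3\<bar> \<le> 2*\<bar>\<gamma>\<bar> / a / w"
       "w * \<bar>3*\<delta> / (w+a)^4\<bar> \<le> 3*\<bar>\<delta>\<bar> / a^2 / w"
    using abs_div_power_add_le(2)[OF assms, of \<beta> 0] abs_div_power_add_le(2)[OF assms, of "2*\<gamma>" 1]
      abs_div_power_add_le(2)[OF assms, of "3*\<delta>" 2]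
    by (simp_all add: numeral_eq_Suc abs_mult)
  have "\<bar>rat_profile_deriv \<alpha> \<beta> \<gamma> \<delta> a w\<bar>
      \<le> \<bar>\<alpha> / w^2\<bar> + \<bar>\<beta> / (w+a)^2\<bar> + \<bar>2*\<gamma> / (w+a)^3\<bar> + \<bar>3*\<delta> / (w+a)^4\<bar>"
    unfolding rat_profile_deriv_def abs_minus_cancel by (rule abs_add4_le)
  then have "w * \<bar>rat_profile_deriv \<alpha> \<beta> \<gamma> \<delta> a w\<bar>
      \<le> w * (\<bar>\<alpha> / w^2\<bar> + \<bar>\<beta> / (w+a)^2\<bar> + \<bar>2*\<gamma> / (w+a)^3\<bar> + \<bar>3*\<delta> / (w+a)^4\<bar>)"
    using assms by (intro mult_left_mono) auto
  also have "\<dots> = \<bar>\<alpha>\<bar> / w + w * \<bar>\<beta> / (w+a)^2\<bar> + w * \<bar>2*\<gamma> / (w+a)^3\<bar> + w * \<bar>3*\<delta> / (w+a)^4\<bar>"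
    using assms by (simp add: distrib_left abs_divide power2_eq_square)
  also have "\<dots> \<le> \<bar>\<alpha>\<bar> / w + \<bar>\<beta>\<bar> / w + 2*\<bar>\<gamma>\<bar> / a / w + 3*\<bar>\<delta>\<bar> / a^2 / w"
    using terms by linarith
  finally show ?thesis by (simp add: add_divide_distrib)
qed

section \<open>Domination of the James--Stein estimator\<close>

lemma borel_measurable_JS_est[measurable]: "JS_est \<in> borel_measurable borel"
  unfolding JS_est_def[abs_def] by measurable

lemma borel_measurable_shrink_est[measurable]: "shrink_est a c \<in> borel_measurable borel"
  unfolding shrink_est_def[abs_def] by measurable

lemma risk_eq_nn_integral:
  fixes \<theta> :: "real^'n"
  assumes [measurable]: "est \<in> borel_measurable borel"
  shows "risk \<theta> est = (\<integral>\<^sup>+x. ennreal (gauss_density \<theta> x * (norm (est x - \<theta>))\<^sup>2) \<partial>lborel)"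
  unfolding risk_def gauss_vec_def
  by (subst nn_integral_density) (auto simp: ennreal_mult gauss_density_nonneg)

text \<open>Since \<open>\<parallel>JS(x)\<parallel>\<^sup>2 = \<parallel>x\<parallel>\<^sup>2 - 2c + c\<^sup>2/\<parallel>x\<parallel>\<^sup>2\<close>, finite James--Stein risk controls
  \<open>E[1/\<parallel>X\<parallel>\<^sup>2]\<close>.\<close>
lemma integrable_gauss_div_norm_sq_of_JS_loss:
  fixes \<theta> :: "real^'n"
  assumes p: "2 < CARD('n)"
    and int_JS: "integrable lborel (\<lambda>x. gauss_density \<theta> x * (norm (JS_est x - \<theta>))\<^sup>2)"
  shows "integrable lborel (\<lambda>x. gauss_density \<theta> x / (norm x)\<^sup>2)"
proof (rule Bochner_Integration.integrable_bound)
  define c where "c = real CARD('n) - 2"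
  define L where "L x = (norm (JS_est x - \<theta>))\<^sup>2" for x
  have c: "0 < c" using p by (simp add: c_def)
  show "integrable lborel (\<lambda>x. (1/c\<^sup>2) * (2 * (gauss_density \<theta> x * L x)
                                   + (2 * (norm \<theta>)\<^sup>2 + 2*c) * gauss_density \<theta> x))"
    using int_JS integrable_gauss_density[of \<theta>] unfolding L_def
    by (intro Bochner_Integration.integrable_mult_right Bochner_Integration.integrable_add) auto
  have "gauss_density \<theta> x / (norm x)\<^sup>2
      \<le> (1/c\<^sup>2) * (2 * (gauss_density \<theta> x * L x) + (2 * (norm \<theta>)\<^sup>2 + 2*c) * gauss_density \<theta> x)"
    for x :: "real^'n"
  proof (cases "x = 0")
    case True
    then show ?thesis using c gauss_density_nonneg[of \<theta> x] by (simp add: L_def)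
  next
    case False
    define W where "W = (norm x)\<^sup>2"
    have W: "0 < W" using False by (simp add: W_def)
    have "norm (JS_est x) \<le> norm \<theta> + norm (JS_est x - \<theta>)" by (rule norm_triangle_sub)
    then have "(norm (JS_est x))\<^sup>2 \<le> 2 * (norm \<theta>)\<^sup>2 + 2 * L x"
      unfolding L_def by (smt (verit) power_mono norm_ge_zero power2_sum zero_le_power2 power2_diff)
    moreover have "(norm (JS_est x))\<^sup>2 = (1 - c/W)\<^sup>2 * W"
      unfolding JS_est_def W_def c_def by (simp add: power_mult_distrib)
    moreover have "(1 - c/W)\<^sup>2 * W = W - 2*c + c\<^sup>2/W"
      using W by (simp add: field_simps power2_eq_square)
    ultimately have "c\<^sup>2/W \<le> 2 * L x + 2 * (norm \<theta>)\<^sup>2 + 2*c" using W by linarith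
    then have "gauss_density \<theta> x * (c\<^sup>2/W) \<le> gauss_density \<theta> x * (2 * L x + 2 * (norm \<theta>)\<^sup>2 + 2*c)"
      using gauss_density_nonneg by (rule mult_left_mono)
    then show ?thesis unfolding W_def[symmetric] using c by (simp add: field_simps)
  qed
  moreover have "0 \<le> gauss_density \<theta> x / (norm x)\<^sup>2" for x
    using gauss_density_nonneg[of \<theta> x] by simp
  ultimately show "AE x in lborel. norm (gauss_density \<theta> x / (norm x)\<^sup>2)
      \<le> norm ((1/c\<^sup>2) * (2 * (gauss_density \<theta> x * L x) + (2 * (norm \<theta>)\<^sup>2 + 2*c) * gauss_density \<theta> x))"
    by (intro AE_I2) (metis abs_of_nonneg order_trans real_norm_def)
qed measurable

lemma integrable_radial_inner_gauss:
  fixes \<theta> :: "real^'n" and k :: "real \<Rightarrow> real"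
  assumes [measurable]: "k \<in> borel_measurable borel"
    and k_le: "\<And>w. 0 < w \<Longrightarrow> \<bar>k w\<bar> \<le> C / w"
    and int_inverse: "integrable lborel (\<lambda>x. gauss_density \<theta> x / (norm x)\<^sup>2)"
  shows "integrable lborel (\<lambda>x. k ((norm x)\<^sup>2) * (\<theta> \<bullet> x) * gauss_density \<theta> x)"
proof (rule Bochner_Integration.integrable_bound)
  have C: "0 \<le> C" using k_le[of 1] by simp
  show "integrable lborel (\<lambda>x. (C * norm \<theta>) * (gauss_density \<theta> x + gauss_density \<theta> x / (norm x)\<^sup>2))"
    using integrable_gauss_density int_inverse
    by (intro Bochner_Integration.integrable_mult_right Bochner_Integration.integrable_add)
  have "\<bar>k ((norm x)\<^sup>2) * (\<theta> \<bullet> x) * gauss_density \<theta> x\<bar>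
      \<le> (C * norm \<theta>) * (gauss_density \<theta> x + gauss_density \<theta> x / (norm x)\<^sup>2)" for x :: "real^'n"
  proof (cases "x = 0")
    case True
    then show ?thesis using C gauss_density_nonneg[of \<theta> x] by simp
  next
    case False
    define W where "W = (norm x)\<^sup>2"
    have r: "0 < norm x" and W: "0 < W" using False by (simp_all add: W_def)
    have gd: "0 \<le> gauss_density \<theta> x" by (rule gauss_density_nonneg)
    have "\<bar>k W * (\<theta> \<bullet> x) * gauss_density \<theta> x\<bar> = \<bar>k W\<bar> * \<bar>\<theta> \<bullet> x\<bar> * gauss_density \<theta> x"
      using gd by (simp add: abs_mult)
    also have "\<dots> \<le> (C / W) * (norm \<theta> * norm x) * gauss_density \<theta> x"
      using k_le[OF W] Cauchy_Schwarz_ineq2[of \<theta> x] gd C W by (intro mult_right_mono mult_mono) auto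
    also have "\<dots> = (C * norm \<theta>) * (1 / norm x) * gauss_density \<theta> x"
      unfolding W_def using r by (simp add: field_simps power2_eq_square)
    also have "\<dots> \<le> (C * norm \<theta>) * (1 + 1/W) * gauss_density \<theta> x"
      unfolding W_def using C gd
      by (intro mult_right_mono mult_left_mono inverse_le_one_plus_inverse_power2 r) simp_all
    also have "\<dots> = (C * norm \<theta>) * (gauss_density \<theta> x + gauss_density \<theta> x / W)"
      by (simp add: algebra_simps)
    finally show ?thesis unfolding W_def .
  qed
  then show "AE x in lborel. norm (k ((norm x)\<^sup>2) * (\<theta> \<bullet> x) * gauss_density \<theta> x)
      \<le> norm ((C * norm \<theta>) * (gauss_density \<theta> x + gauss_density \<theta> x / (norm x)\<^sup>2))"
    using C gauss_density_nonneg[of \<theta>] by (intro AE_I2) simp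
qed measurable

lemma integrable_bounded_radial_gauss:
  fixes \<theta> :: "real^'n" and G :: "real \<Rightarrow> real"
  assumes [measurable]: "G \<in> borel_measurable borel" and G_le: "\<And>w. 0 \<le> w \<Longrightarrow> \<bar>G w\<bar> \<le> C"
  shows "integrable lborel (\<lambda>x. G ((norm x)\<^sup>2) * gauss_density \<theta> x)"
proof (rule Bochner_Integration.integrable_bound)
  show "integrable lborel (\<lambda>x. C * gauss_density \<theta> x)"
    using integrable_gauss_density by (rule Bochner_Integration.integrable_mult_right)
  show "AE x in lborel. norm (G ((norm x)\<^sup>2) * gauss_density \<theta> x) \<le> norm (C * gauss_density \<theta> x)"
    using G_le[of 0] G_le[OF zero_le_power2] gauss_density_nonneg[of \<theta>]
    by (intro AE_I2) (simp add: abs_mult mult_right_mono)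
qed measurable

definition shrink_profile :: "real \<Rightarrow> real \<Rightarrow> real \<Rightarrow> real" where
  "shrink_profile a c = rat_profile (-c) c (-c*a) (c*a*(4-a)) a"

definition shrink_profile_deriv :: "real \<Rightarrow> real \<Rightarrow> real \<Rightarrow> real" where
  "shrink_profile_deriv a c = rat_profile_deriv (-c) c (-c*a) (c*a*(4-a)) a"

definition inner_weight :: "real \<Rightarrow> real \<Rightarrow> real" where
  "inner_weight a w = a/(w*(w+a)^2) + (4-a)/(w+a)^3"

definition loss_remainder :: "real \<Rightarrow> real \<Rightarrow> real \<Rightarrow> real" where
  "loss_remainder a p w = (((4-a)*p - (a^2-6*a+24))*w + a*((4-a)*p - a^2))/(w+a)^4"

lemma borel_measurable_shrink_loss_terms[measurable]:
  "shrink_profile a c \<in> borel_measurable borel" "shrink_profile_deriv a c \<in> borel_measurable borel"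
  "inner_weight a \<in> borel_measurable borel" "loss_remainder a p \<in> borel_measurable borel"
  unfolding shrink_profile_def shrink_profile_deriv_def inner_weight_def[abs_def]
    loss_remainder_def[abs_def] by measurable

lemma JS_loss_minus_shrink_loss:
  fixes \<theta> x :: "real^'n"
  assumes x: "x \<noteq> 0" and a: "0 < a"
  defines "c \<equiv> real CARD('n) - 2"
  shows "(norm (JS_est x - \<theta>))\<^sup>2 - (norm (shrink_est a c x - \<theta>))\<^sup>2
       = stein_term (shrink_profile a c) (shrink_profile_deriv a c) \<theta> x
         + c * a * (inner_weight a ((norm x)\<^sup>2) * (\<theta> \<bullet> x)) + c * a * loss_remainder a CARD('n) ((norm x)\<^sup>2)"
proof -
  have identity: "((1 - c/W)^2 * W - 2*(1 - c/W)*T + N) - ((1 - c/(W+a))^2 * W - 2*(1 - c/(W+a))*T + N)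
       = (shrink_profile a c W * (W - T) - (c + 2) * shrink_profile a c W - 2 * W * shrink_profile_deriv a c W)
         + c * a * (inner_weight a W * T) + c * a * loss_remainder a (c + 2) W"
    if "0 < W" for W T N
  proof -
    have "W + a \<noteq> 0" "W \<noteq> 0" using that a by auto
    then show ?thesis
      unfolding shrink_profile_def shrink_profile_deriv_def rat_profile_def rat_profile_deriv_def
        inner_weight_def loss_remainder_def
      by (simp add: divide_simps) algebra
  qed
  show ?thesis
    using identity[of "(norm x)\<^sup>2" "\<theta> \<bullet> x" "(norm \<theta>)\<^sup>2"] x
    unfolding JS_est_def shrink_est_def norm_scaleR_diff_power2 stein_term_def c_def
    by (simp add: power_mult_distrib)
qed

lemma stein_identity_shrink_profile:
  fixes \<theta> :: "real^'n"
  assumes a: "0 < a" and int_inverse: "integrable lborel (\<lambda>x. gauss_density \<theta> x / (norm x)\<^sup>2)"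
  shows "integrable lborel (\<lambda>x. stein_term (shrink_profile a c) (shrink_profile_deriv a c) \<theta> x
                                 * gauss_density \<theta> x)"
    and "(\<integral>x. stein_term (shrink_profile a c) (shrink_profile_deriv a c) \<theta> x * gauss_density \<theta> x
           \<partial>lborel) = 0"
proof -
  define M where "M = \<bar>-c\<bar> + \<bar>c\<bar> + 2*\<bar>-c*a\<bar>/a + 3*\<bar>c*a*(4-a)\<bar>/a^2"
  have "(shrink_profile a c has_real_derivative shrink_profile_deriv a c w) (at w)"
    "\<bar>shrink_profile a c w\<bar> \<le> M / w" "w * \<bar>shrink_profile_deriv a c w\<bar> \<le> M / w" if "0 < w" for w
    unfolding shrink_profile_def shrink_profile_deriv_def M_def using that a
    by (fact has_real_derivative_rat_profile abs_rat_profile_le abs_rat_profile_deriv_le)+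
  from stein_identity_radial[OF _ _ this int_inverse] show
    "integrable lborel (\<lambda>x. stein_term (shrink_profile a c) (shrink_profile_deriv a c) \<theta> x
                           * gauss_density \<theta> x)"
    "(\<integral>x. stein_term (shrink_profile a c) (shrink_profile_deriv a c) \<theta> x * gauss_density \<theta> x
       \<partial>lborel) = 0"
    by auto
qed

lemma inner_weight_nonneg: "0 \<le> w \<Longrightarrow> 0 < a \<Longrightarrow> a < 4 \<Longrightarrow> 0 \<le> inner_weight a w"
  by (simp add: inner_weight_def)

lemma inner_weight_le:
  fixes w a :: real
  assumes w: "0 < w" and a: "0 < a" "a < 4"
  shows "inner_weight a w \<le> (4/a^2) / w"
proof -
  have "a/(w*(w+a)^2) \<le> a/(w*a^2)"
    using w a by (intro divide_left_mono mult_left_mono power_mono) auto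
  moreover have "(4-a)/(w+a)^3 \<le> (4-a)/a^2/w"
    using abs_div_power_add_le(1)[OF w a(1), of "4-a" 2] a w by (simp add: numeral_eq_Suc)
  moreover have "a/(w*a^2) + (4-a)/a^2/w = (4/a^2) / w"
    using w a by (simp add: field_simps power2_eq_square)
  ultimately show ?thesis unfolding inner_weight_def by linarith
qed

lemma loss_remainder_bounds:
  fixes w a p :: real
  assumes w: "0 \<le> w" and a: "0 < a" "a < 4" and p: "2 * (12 - a) / (4 - a) \<le> p"
  defines "A \<equiv> (4-a)*p - (a^2-6*a+24)" and "B \<equiv> a*((4-a)*p - a^2)"
  shows "0 \<le> loss_remainder a p w" and "loss_remainder a p w \<le> (A + B/a)/a^3"
proof -
  have p': "24 - 2*a \<le> (4-a)*p" using p a by (simp add: divide_le_eq algebra_simps)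
  have "0 \<le> a*(4-a)" "0 \<le> (4-a)*(6+a)" using a by simp_all
  moreover have "a*(4-a) = 4*a - a^2" "(4-a)*(6+a) = 24 - 2*a - a^2"
    by (simp_all add: algebra_simps power2_eq_square)
  ultimately have "0 \<le> A" "0 \<le> (4-a)*p - a^2"
    using p' unfolding A_def by (simp_all add: algebra_simps)
  then have A: "0 \<le> A" and B: "0 \<le> B" using a unfolding B_def by simp_all
  have eq: "loss_remainder a p w = (A*w + B)/(w+a)^4"
    unfolding loss_remainder_def A_def B_def ..
  show "0 \<le> loss_remainder a p w" unfolding eq using w a A B by simp
  have wa: "0 < w + a" using w a by simp
  have "a^3 * (w+a) \<le> (w+a)^3 * (w+a)"
    using w a by (intro mult_right_mono power_mono) auto
  then have den: "a^3 * (w+a) \<le> (w+a)^4" by (simp add: eval_nat_numeral)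
  have num: "A*w + B \<le> (A + B/a) * (w+a)"
    using a w A B by (simp add: field_simps add_mono mult_left_mono)
  have "(A*w + B)/(w+a)^4 \<le> (A*w + B)/(a^3 * (w+a))"
    using w a A B den wa by (intro divide_left_mono) auto
  also have "\<dots> \<le> ((A + B/a) * (w+a))/(a^3 * (w+a))"
    using num a wa by (intro divide_right_mono) auto
  also have "\<dots> = (A + B/a)/a^3" using wa by simp
  finally show "loss_remainder a p w \<le> (A + B/a)/a^3" unfolding eq .
qed

lemma dimension_bound_gt_6:
  fixes a p :: real
  assumes a: "0 < a" "a < 4" and p: "2 * (12 - a) / (4 - a) \<le> p"
  shows "6 < p"
proof -
  have "24 - 2*a \<le> (4-a)*p" using p a by (simp add: divide_le_eq algebra_simps)
  then have "0 < (4-a)*(p-6)" using a by (simp add: algebra_simps)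
  then show "6 < p" using a by (simp add: zero_less_mult_iff)
qed

lemma integral_shrink_loss_le_JS_loss:
  fixes a :: real and \<theta> :: "real^'n"
  assumes a: "0 < a" "a < 4" and p: "2 * (12 - a) / (4 - a) \<le> real CARD('n)"
    and int_JS: "integrable lborel (\<lambda>x. gauss_density \<theta> x * (norm (JS_est x - \<theta>))\<^sup>2)"
  defines "L\<^sub>a \<equiv> \<lambda>x. (norm (shrink_est a (real CARD('n) - 2) x - \<theta>))\<^sup>2"
  shows "integrable lborel (\<lambda>x. gauss_density \<theta> x * L\<^sub>a x)"
    and "(\<integral>x. gauss_density \<theta> x * L\<^sub>a x \<partial>lborel)
           \<le> (\<integral>x. gauss_density \<theta> x * (norm (JS_est x - \<theta>))\<^sup>2 \<partial>lborel)"
proof -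
  define c where "c = real CARD('n) - 2"
  define \<phi> where "\<phi> = gauss_density \<theta>"
  define L\<^sub>J where "L\<^sub>J x = (norm (JS_est x - \<theta>))\<^sup>2" for x
  define S where "S x = stein_term (shrink_profile a c) (shrink_profile_deriv a c) \<theta> x * \<phi> x" for x
  define K where "K x = inner_weight a ((norm x)\<^sup>2) * (\<theta> \<bullet> x) * \<phi> x" for x :: "real^'n"
  define R where "R x = loss_remainder a CARD('n) ((norm x)\<^sup>2) * \<phi> x" for x :: "real^'n"
  have c: "0 < c" using dimension_bound_gt_6[OF a p] by (simp add: c_def)
  have [measurable]: "\<phi> \<in> borel_measurable borel" "L\<^sub>a \<in> borel_measurable borel"
    unfolding \<phi>_def L\<^sub>a_def by measurable
  have int_J: "integrable lborel (\<lambda>x. \<phi> x * L\<^sub>J x)" using int_JS unfolding \<phi>_def L\<^sub>J_def .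
  have int_inverse: "integrable lborel (\<lambda>x. gauss_density \<theta> x / (norm x)\<^sup>2)"
    using c int_JS unfolding c_def by (intro integrable_gauss_div_norm_sq_of_JS_loss) auto
  have int_S: "integrable lborel S" and S0: "integral\<^sup>L lborel S = 0"
    using stein_identity_shrink_profile[OF a(1) int_inverse] unfolding S_def \<phi>_def by auto
  have int_K: "integrable lborel K"
    unfolding K_def \<phi>_def using inner_weight_nonneg a inner_weight_le[OF _ a] int_inverse
    by (intro integrable_radial_inner_gauss[of _ "4/a^2"]) auto
  have int_R: "integrable lborel R"
    unfolding R_def \<phi>_def using loss_remainder_bounds[OF _ a p]
    by (intro integrable_bounded_radial_gauss) auto
  have "AE x in lborel. \<phi> x * L\<^sub>a x = \<phi> x * L\<^sub>J x - S x - c*a*K x - c*a*R x"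
    using AE_lborel_singleton[of 0]
  proof eventually_elim
    case (elim x)
    have "L\<^sub>J x - L\<^sub>a x = stein_term (shrink_profile a c) (shrink_profile_deriv a c) \<theta> x
        + c * a * (inner_weight a ((norm x)\<^sup>2) * (\<theta> \<bullet> x)) + c * a * loss_remainder a CARD('n) ((norm x)\<^sup>2)"
      using JS_loss_minus_shrink_loss[OF elim a(1), of \<theta>] unfolding L\<^sub>a_def L\<^sub>J_def c_def .
    then have "\<phi> x * (L\<^sub>J x - L\<^sub>a x) = S x + c*a*K x + c*a*R x"
      unfolding S_def K_def R_def by (simp add: algebra_simps)
    then show ?case by (simp add: algebra_simps)
  qed
  note L_a_eq = integrable_cong_AE[OF _ _ this] integral_cong_AE[OF _ _ this]
  show "integrable lborel (\<lambda>x. gauss_density \<theta> x * L\<^sub>a x)"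
    unfolding \<phi>_def[symmetric] using int_J int_S int_K int_R by (subst L_a_eq) auto
  have "(\<integral>x. \<phi> x * L\<^sub>a x \<partial>lborel)
      = (\<integral>x. \<phi> x * L\<^sub>J x \<partial>lborel) - integral\<^sup>L lborel S - c*a*integral\<^sup>L lborel K - c*a*integral\<^sup>L lborel R"
    using int_J int_S int_K int_R by (subst L_a_eq) auto
  moreover have "0 \<le> integral\<^sup>L lborel K"
    unfolding K_def \<phi>_def using inner_weight_nonneg a int_K[unfolded K_def \<phi>_def]
    by (intro integral_radial_inner_gauss_nonneg) auto
  moreover have "0 \<le> integral\<^sup>L lborel R"
    unfolding R_def \<phi>_def using loss_remainder_bounds(1)[OF zero_le_power2 a p] gauss_density_nonneg
    by (intro integral_nonneg_AE AE_I2 mult_nonneg_nonneg)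
  ultimately show "(\<integral>x. gauss_density \<theta> x * L\<^sub>a x \<partial>lborel)
      \<le> (\<integral>x. gauss_density \<theta> x * (norm (JS_est x - \<theta>))\<^sup>2 \<partial>lborel)"
    unfolding \<phi>_def[symmetric] L\<^sub>J_def[symmetric] S0 using c a
    by (smt (verit) mult_nonneg_nonneg)
qed

theorem risk_shrink_est_le_risk_JS_est:
  fixes a :: real and \<theta> :: "real^'n"
  assumes "0 < a" "a < 4" and "2 * (12 - a) / (4 - a) \<le> real CARD('n)"
  shows "risk \<theta> (shrink_est a (real CARD('n) - 2)) \<le> risk \<theta> JS_est"
proof (cases "risk \<theta> JS_est = \<infinity>")
  case False
  then have int_JS: "integrable lborel (\<lambda>x. gauss_density \<theta> x * (norm (JS_est x - \<theta>))\<^sup>2)"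
    unfolding risk_eq_nn_integral[OF borel_measurable_JS_est]
    by (intro integrableI_nonneg) (auto simp: gauss_density_nonneg top.not_eq_extremum)
  note shrink = integral_shrink_loss_le_JS_loss[OF assms int_JS]
  show ?thesis
    unfolding risk_eq_nn_integral[OF borel_measurable_JS_est]
      risk_eq_nn_integral[OF borel_measurable_shrink_est]
    using shrink int_JS
    by (subst (1 2) nn_integral_eq_integral) (auto simp: gauss_density_nonneg ennreal_leI)
qed simp

section \<open>A lower bound for the functional I\<close>

lemma set_integrable_gamma_kernel:
  fixes s :: real
  assumes s: "0 < s"
  shows "set_integrable lborel {0<..} (\<lambda>w. w powr (s - 1) * exp (- w/2))"
proof -
  define f where "f t = t powr (s - 1) / exp t" for t :: real
  have [measurable]: "f \<in> borel_measurable borel" unfolding f_def[abs_def] by measurable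
  have "f integrable_on {0..}" unfolding f_def using Gamma_integral_real[OF s] by blast
  then have "f absolutely_integrable_on {0..}"
    by (rule nonnegative_absolutely_integrable_1) (simp add: f_def)
  then have "integrable lborel (\<lambda>t. indicator {0..} t * f t)"
    by (simp add: set_integrable_def integrable_completion)
  then have "integrable lborel (\<lambda>w. (\<lambda>t. indicator {0..} t * f t) (0 + (1/2) * w))"
    by (rule lborel_integrable_real_affine) simp
  then have "integrable lborel (\<lambda>w. 2 powr (s - 1) * (indicator {0..} (w/2) * f (w/2)))"
    by (intro Bochner_Integration.integrable_mult_right) simp
  then show ?thesis
    unfolding set_integrable_def
  proof (rule Bochner_Integration.integrable_bound)
    have "2 powr (s - 1) * f (w/2) = w powr (s - 1) * exp (- w/2)" if "0 < w" for w
      using that unfolding f_def by (simp add: powr_divide exp_minus field_simps)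
    then show "AE w in lborel. norm (indicator {0<..} w *\<^sub>R (w powr (s - 1) * exp (- w/2)))
        \<le> norm (2 powr (s - 1) * (indicator {0..} (w/2) * f (w/2)))"
      by (intro AE_I2) (simp add: indicator_def)
  qed measurable
qed

lemma set_integral_pos_on_pos_reals:
  fixes h :: "real \<Rightarrow> real"
  assumes h: "set_integrable lborel {0<..} h" and pos: "\<And>w. 0 < w \<Longrightarrow> 0 < h w"
  shows "0 < (LINT w:{0<..}|lborel. h w)"
proof -
  have nonneg: "AE w in lborel. 0 \<le> indicator {0<..} w *\<^sub>R h w"
    using pos by (intro AE_I2) (auto simp: indicator_def less_imp_le)
  have "(LINT w:{0<..}|lborel. h w) \<noteq> 0"
  proof
    assume "(LINT w:{0<..}|lborel. h w) = 0"
    then have "AE w in lborel. indicator {0<..} w *\<^sub>R h w = 0"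
      using integral_nonneg_eq_0_iff_AE[OF h[unfolded set_integrable_def] nonneg]
      by (simp add: set_lebesgue_integral_def)
    then have "AE w in lborel. w \<notin> {0<..<1::real}"
      by eventually_elim (auto simp: indicator_def dest: pos split: if_splits)
    then have "emeasure lborel {0<..<1::real} = 0"
      by (subst (asm) AE_iff_measurable[of "{0<..<1::real}"]) auto
    then show False by simp
  qed
  moreover have "0 \<le> (LINT w:{0<..}|lborel. h w)"
    unfolding set_lebesgue_integral_def by (rule integral_nonneg_AE[OF nonneg])
  ultimately show ?thesis by simp
qed

lemma mult_powr_diff_one: "0 < (w::real) \<Longrightarrow> w * w powr (k - 1) = w powr k"
  by (simp add: powr_mult_base)

definition gamma_weight :: "real \<Rightarrow> real \<Rightarrow> real \<Rightarrow> real" where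
  "gamma_weight k a w = w powr (k - 1) * exp (- w/2) / (w+a)^2"

lemma gamma_weight_pos: "0 < w \<Longrightarrow> 0 < a \<Longrightarrow> 0 < gamma_weight k a w"
  by (simp add: gamma_weight_def)

lemma gamma_weight_mult_frac_le:
  "0 < w \<Longrightarrow> 0 < a \<Longrightarrow> gamma_weight k a w * (w/(w+a)) \<le> gamma_weight k a w"
  using gamma_weight_pos[of w a k] by (intro mult_left_le) auto

lemma set_integrable_gamma_weight:
  fixes k a :: real
  assumes k: "0 < k" and a: "0 < a"
  shows "set_integrable lborel {0<..} (gamma_weight k a)"
proof (rule set_integrable_bound[OF set_integrable_mult_right[OF set_integrable_gamma_kernel[OF k], of "1/a^2"]])
  show "set_borel_measurable lborel {0<..} (gamma_weight k a)"
    unfolding gamma_weight_def[abs_def] by (simp add: set_borel_measurable_def)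
  have "gamma_weight k a w \<le> w powr (k - 1) * exp (- w/2) / a^2" if "0 < w" for w
    unfolding gamma_weight_def using that a by (intro divide_left_mono power_mono) auto
  then show "AE w in lborel. w \<in> {0<..} \<longrightarrow> norm (gamma_weight k a w)
      \<le> norm ((1/a^2) * (w powr (k - 1) * exp (- w/2)))"
    using gamma_weight_pos[OF _ a] by (intro AE_I2) (auto simp: less_imp_le)
qed

lemma set_integrable_gamma_weight_moments:
  fixes k a :: real
  assumes k: "0 < k" and a: "0 < a"
  shows "set_integrable lborel {0<..} (\<lambda>w. w * gamma_weight k a w)"
    and "set_integrable lborel {0<..} (\<lambda>w. gamma_weight k a w * (w/(w+a)))"
proof -
  have "set_integrable lborel {0<..} (gamma_weight (k + 1) a)"
    using k a by (intro set_integrable_gamma_weight) auto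
  moreover have "set_integrable lborel {0<..} (\<lambda>w. w * gamma_weight k a w)
      \<longleftrightarrow> set_integrable lborel {0<..} (gamma_weight (k + 1) a)"
    by (rule set_integrable_cong) (auto simp: gamma_weight_def mult_powr_diff_one)
  ultimately show "set_integrable lborel {0<..} (\<lambda>w. w * gamma_weight k a w)" by simp
  show "set_integrable lborel {0<..} (\<lambda>w. gamma_weight k a w * (w/(w+a)))"
  proof (rule set_integrable_bound[OF set_integrable_gamma_weight[OF k a]])
    show "set_borel_measurable lborel {0<..} (\<lambda>w. gamma_weight k a w * (w/(w+a)))"
      unfolding gamma_weight_def by (simp add: set_borel_measurable_def)
    show "AE w in lborel. w \<in> {0<..} \<longrightarrow> norm (gamma_weight k a w * (w/(w+a))) \<le> norm (gamma_weight k a w)"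
      using gamma_weight_pos[OF _ a] gamma_weight_mult_frac_le[OF _ a] a
      by (intro AE_I2) (auto simp: abs_of_pos)
  qed
qed

lemma has_real_derivative_gamma_weight_antiderivative:
  fixes k a x :: real
  assumes x: "0 < x" and a: "0 < a"
  shows "((\<lambda>w. w powr k * exp (- w/2) / (w+a)^2) has_real_derivative
           k * gamma_weight k a x - (1/2) * (x * gamma_weight k a x)
           - 2 * (gamma_weight k a x * (x/(x+a)))) (at x)"
proof -
  have "((\<lambda>w. w powr k * exp (- w/2) / (w+a)^2) has_real_derivative
      (k * x powr (k - 1) * exp (- x/2) + x powr k * (exp (- x/2) * (- 1/2))) / (x+a)^2
      - x powr k * exp (- x/2) * (2 * (x+a)) / ((x+a)^2)^2) (at x)"
    using x a by (auto intro!: derivative_eq_intros simp: power2_eq_square diff_divide_distrib)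
  moreover have "(k * x powr (k - 1) * exp (- x/2) + x powr k * (exp (- x/2) * (- 1/2))) / (x+a)^2
      - x powr k * exp (- x/2) * (2 * (x+a)) / ((x+a)^2)^2
      = k * gamma_weight k a x - (1/2) * (x * gamma_weight k a x) - 2 * (gamma_weight k a x * (x/(x+a)))"
  proof -
    have "x + a \<noteq> 0" using x a by simp
    then show ?thesis
      unfolding gamma_weight_def using mult_powr_diff_one[OF x, of k, symmetric]
      by (simp add: divide_simps) (simp add: algebra_simps eval_nat_numeral)
  qed
  ultimately show ?thesis by simp
qed

text \<open>The antiderivative vanishes at \<open>0\<close> (as \<open>k > 0\<close>) and at \<open>\<infinity>\<close>.\<close>
lemma gamma_weight_integration_by_parts:
  fixes k a :: real
  assumes k: "0 < k" and a: "0 < a"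
  shows "k * (LINT w:{0<..}|lborel. gamma_weight k a w) - (1/2) * (LINT w:{0<..}|lborel. w * gamma_weight k a w)
           - 2 * (LINT w:{0<..}|lborel. gamma_weight k a w * (w/(w+a))) = 0"
proof -
  define h where "h = gamma_weight k a"
  define F where "F w = w powr k * exp (- w/2) / (w+a)^2" for w
  define F' where "F' w = k * h w - (1/2) * (w * h w) - 2 * (h w * (w/(w+a)))" for w
  note int_h = set_integrable_gamma_weight[OF k a, folded h_def]
  note int_moments = set_integrable_gamma_weight_moments[OF k a, folded h_def]
  have int_F': "set_integrable lborel {0<..} F'"
    unfolding F'_def using int_h int_moments by (intro set_integral_diff(1) set_integrable_mult_right)
  have "(LBINT x=0..\<infinity>. F' x) = 0 - 0"
  proof (rule interval_integral_FTC_integrable[where F=F])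
    fix x assume "0 < ereal x" "ereal x < \<infinity>"
    then have x: "0 < x" by (simp add: zero_ereal_def)
    show "(F has_vector_derivative F' x) (at x)"
      using has_real_derivative_gamma_weight_antiderivative[OF x a, of k]
      unfolding F_def[abs_def] F'_def h_def by (simp add: has_real_derivative_iff_has_vector_derivative)
    show "isCont F' x"
      unfolding F'_def h_def gamma_weight_def using x a by (auto intro!: continuous_intros)
  next
    show "set_integrable lborel (einterval 0 \<infinity>) F'" using int_F' by (simp add: zero_ereal_def)
    show "((F \<circ> real_of_ereal) \<longlongrightarrow> 0) (at_right 0)"
      unfolding zero_ereal_def ereal_tendsto_simps F_def using k a by real_asymp
    show "((F \<circ> real_of_ereal) \<longlongrightarrow> 0) (at_left \<infinity>)"
      unfolding ereal_tendsto_simps F_def using k a by real_asymp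
  qed simp
  then have "(LINT w:{0<..}|lborel. F' w) = 0"
    by (simp add: interval_lebesgue_integral_0_infty)
  moreover have "(LINT w:{0<..}|lborel. F' w) = (LINT w:{0<..}|lborel. k * h w - (1/2) * (w * h w))
      - (LINT w:{0<..}|lborel. 2 * (h w * (w/(w+a))))"
    unfolding F'_def using int_h int_moments
    by (intro set_integral_diff(2) set_integral_diff(1) set_integrable_mult_right)
  moreover have "(LINT w:{0<..}|lborel. k * h w - (1/2) * (w * h w))
      = (LINT w:{0<..}|lborel. k * h w) - (LINT w:{0<..}|lborel. (1/2) * (w * h w))"
    using int_h int_moments by (intro set_integral_diff(2) set_integrable_mult_right)
  ultimately show ?thesis unfolding h_def by (simp only: set_integral_mult_right)
qed

lemma gamma_weight_first_moment_ge:
  fixes k a :: real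
  assumes k: "0 < k" and a: "0 < a"
  shows "(2*k - 4) * (LINT w:{0<..}|lborel. gamma_weight k a w)
           \<le> (LINT w:{0<..}|lborel. w * gamma_weight k a w)"
proof -
  have "(LINT w:{0<..}|lborel. gamma_weight k a w * (w/(w+a))) \<le> (LINT w:{0<..}|lborel. gamma_weight k a w)"
    using set_integrable_gamma_weight_moments(2)[OF k a] set_integrable_gamma_weight[OF k a]
      gamma_weight_mult_frac_le[OF _ a]
    by (intro set_integral_mono) auto
  then show ?thesis using gamma_weight_integration_by_parts[OF k a] by (simp add: algebra_simps)
qed

lemma interval_integral_linear_div_id:
  fixes b w :: real
  assumes "0 < w"
  shows "(LBINT t=0..w. (t / b) / t) = w / b"
proof -
  have "(LBINT t=0..w. (t / b) / t) = (LBINT t=ereal 0..ereal w. 1 / b)"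
    unfolding zero_ereal_def
    by (rule interval_integral_cong) (use assms in \<open>auto simp: einterval_iff\<close>)
  then show ?thesis by (simp add: interval_integral_const)
qed

lemma I_weight_linear:
  fixes a c w :: real and p :: nat
  assumes w: "0 < w" and a: "0 < a" and c: "0 < c"
  shows "I_weight (\<lambda>w. w / (a*c)) (1/c) p w
           = (a*c)^2 * (w powr (real p/2 - 2) * exp (- w/2) / (w+a)^2)"
proof -
  have Phi: "(LBINT t=0..w. (t / (a*c)) / t) + 1/c = (w + a)/(a*c)"
    unfolding interval_integral_linear_div_id[OF w] using a c by (simp add: field_simps)
  have pow: "w powr (real p/2 - 1) = w powr (real p/2 - 2) * w"
    using mult_powr_diff_one[OF w, of "real p/2 - 1"] by (simp add: algebra_simps)
  have "w + a \<noteq> 0" "a * c \<noteq> 0" using w a c by auto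
  then show ?thesis
    unfolding I_weight_def Phi pow using w by (simp add: field_simps power_divide)
qed

theorem I_fun_linear_ge:
  fixes a :: real and p :: nat
  assumes a: "0 < a" and p: "2 < p"
  shows "(real p - 6) / (a * (real p - 2)) \<le> I_fun (\<lambda>w. w / (a * (real p - 2))) (1 / (real p - 2)) p"
proof -
  define c where "c = real p - 2"
  have c: "0 < c" and ac: "0 < a * c" using p a by (simp_all add: c_def)
  define h where "h = gamma_weight (real p/2 - 1) a"
  have k: "0 < real p/2 - 1" using p by simp
  have J0: "0 < (LINT w:{0<..}|lborel. h w)"
    unfolding h_def using set_integrable_gamma_weight[OF k a] gamma_weight_pos[OF _ a]
    by (rule set_integral_pos_on_pos_reals)
  have J1: "(real p - 6) * (LINT w:{0<..}|lborel. h w) \<le> (LINT w:{0<..}|lborel. w * h w)"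
    using gamma_weight_first_moment_ge[OF k a] unfolding h_def by (simp add: algebra_simps)
  have weight: "I_weight (\<lambda>w. w / (a*c)) (1/c) p w = (a*c)^2 * h w" if "0 < w" for w
    unfolding I_weight_linear[OF that a c] h_def gamma_weight_def by simp
  have "(\<integral>w\<in>{0<..}. (w / (a*c)) * I_weight (\<lambda>w. w / (a*c)) (1/c) p w \<partial>lborel)
      = (LINT w:{0<..}|lborel. (a*c) * (w * h w))"
    using ac by (intro set_lebesgue_integral_cong) (auto simp: weight power2_eq_square)
  moreover have "(\<integral>w\<in>{0<..}. I_weight (\<lambda>w. w / (a*c)) (1/c) p w \<partial>lborel)
      = (LINT w:{0<..}|lborel. (a*c)^2 * h w)"
    by (intro set_lebesgue_integral_cong) (auto simp: weight)
  ultimately have "I_fun (\<lambda>w. w / (a*c)) (1/c) p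
      = (LINT w:{0<..}|lborel. w * h w) / ((a*c) * (LINT w:{0<..}|lborel. h w))"
    unfolding I_fun_def using ac by (simp add: power2_eq_square)
  also have "\<dots> \<ge> (real p - 6) / (a*c)"
    using J0 J1 a c by (simp add: divide_simps mult.commute)
  finally show ?thesis unfolding c_def .
qed

theorem mainTheorem8:
  fixes a :: real
  assumes "0 < a" and "a < 4"
  shows "(real CARD('n) \<ge> 2 * (12 - a) / (4 - a) \<longrightarrow>
            (\<forall>\<theta> :: real^'n.
               risk \<theta> (shrink_est a (real CARD('n) - 2)) \<le> risk \<theta> JS_est))
       \<and> (CARD('n) \<ge> 7 \<longrightarrow>
            I_fun (\<lambda>w. w / (a * (real CARD('n) - 2))) (1 / (real CARD('n) - 2)) CARD('n)
              \<ge> (real CARD('n) - 6) / (a * (real CARD('n) - 2)))"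
  using risk_shrink_est_le_risk_JS_est[OF assms] I_fun_linear_ge[OF assms(1), of "CARD('n)"]
  by auto

end
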